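(* Let $T$ be a tree with $n\ge 3$ vertices, and let $\delta'$ be the minimum degree of an internal vertex of $T$ (a vertex of degree greater than $1$). Then $$av_1(T)\le 2+\frac{n-\delta'-1}{2}.$$
   Context: For a graph $G=(V,E)$, a set $S\subseteq V$ is a $1$-nearly independent vertex set if the subgraph induced by $S$ has exactly one edge. $\sigma_1(G)$ is the number of such sets, $S_1(G)$ the sum of their sizes, and $av_1(G)=S_1(G)/\sigma_1(G)$. *)

theory Defs
  imports Complex_Main
begin

definition simple_graph :: "'a set \<Rightarrow> 'a set set \<Rightarrow> bool" where
  "simple_graph V E \<longleftrightarrow> finite V \<and> (\<forall>e\<in>E. e \<subseteq> V \<and> card e = 2)"

definition adj :: "'a set set \<Rightarrow> 'a \<Rightarrow> 'a \<Rightarrow> bool" where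
  "adj E u v \<longleftrightarrow> {u, v} \<in> E"

definition connected_graph :: "'a set \<Rightarrow> 'a set set \<Rightarrow> bool" where
  "connected_graph V E \<longleftrightarrow> V \<noteq> {} \<and> (\<forall>u\<in>V. \<forall>v\<in>V. (adj E)\<^sup>*\<^sup>* u v)"

definition is_cycle :: "'a set set \<Rightarrow> 'a list \<Rightarrow> bool" where
  "is_cycle E cs \<longleftrightarrow> length cs \<ge> 3 \<and> distinct cs \<and>
     (\<forall>i < length cs - 1. adj E (cs ! i) (cs ! Suc i)) \<and> adj E (last cs) (hd cs)"

definition acyclic_graph :: "'a set \<Rightarrow> 'a set set \<Rightarrow> bool" where
  "acyclic_graph V E \<longleftrightarrow> \<not> (\<exists>cs. set cs \<subseteq> V \<and> is_cycle E cs)"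

definition is_tree :: "'a set \<Rightarrow> 'a set set \<Rightarrow> bool" where
  "is_tree V E \<longleftrightarrow> simple_graph V E \<and> connected_graph V E \<and> acyclic_graph V E"

definition degree :: "'a set set \<Rightarrow> 'a \<Rightarrow> nat" where
  "degree E v = card {e \<in> E. v \<in> e}"

definition min_internal_degree :: "'a set \<Rightarrow> 'a set set \<Rightarrow> nat" where
  "min_internal_degree V E = Min {degree E v | v. v \<in> V \<and> degree E v > 1}"

definition nearly_indep1 :: "'a set \<Rightarrow> 'a set set \<Rightarrow> 'a set set" where
  "nearly_indep1 V E = {S. S \<subseteq> V \<and> card {e \<in> E. e \<subseteq> S} = 1}"

definition sigma1 :: "'a set \<Rightarrow> 'a set set \<Rightarrow> nat" where
  "sigma1 V E = card (nearly_indep1 V E)"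

definition S1 :: "'a set \<Rightarrow> 'a set set \<Rightarrow> nat" where
  "S1 V E = (\<Sum>S \<in> nearly_indep1 V E. card S)"

definition av1 :: "'a set \<Rightarrow> 'a set set \<Rightarrow> real" where
  "av1 V E = real (S1 V E) / real (sigma1 V E)"

end

(*
  Group the 1-nearly independent sets by their unique edge e. Such a set consists of e together
  with vertices outside the closed neighbourhood N[e] of e, and for each vertex x outside N[e],
  deleting x maps the sets containing x injectively to those avoiding x. So x lies in at most
  half of the sets with edge e, and their average size is at most 2 + |V - N[e]| / 2. In a
  connected graph with at least 3 vertices one end of e is internal, whence
  |N[e]| >= delta' + 1. Averaging over the edges gives the bound.
*)

theory Submission
  imports Defs
begin

definition nearly_indep1_with_edge :: "'a set \<Rightarrow> 'a set set \<Rightarrow> 'a set \<Rightarrow> 'a set set" where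
  "nearly_indep1_with_edge V E e = {S \<in> nearly_indep1 V E. e \<subseteq> S}"

definition closed_nbhd :: "'a set set \<Rightarrow> 'a set \<Rightarrow> 'a set" where
  "closed_nbhd E X = X \<union> {w. \<exists>x\<in>X. adj E x w}"

lemma simple_graph_edgeE:
  assumes "simple_graph V E" "e \<in> E"
  obtains u v where "e = {u, v}" "u \<noteq> v" "u \<in> V" "v \<in> V"
  using assms unfolding simple_graph_def by (metis card_2_iff insert_subset)

lemma simple_graph_finite_edges: "simple_graph V E \<Longrightarrow> finite E"
  unfolding simple_graph_def by (metis Pow_iff finite_Pow_iff finite_subset subsetI)

lemma finite_nearly_indep1: "simple_graph V E \<Longrightarrow> finite (nearly_indep1 V E)"
  unfolding simple_graph_def nearly_indep1_def by (auto intro: finite_subset[of _ "Pow V"])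

lemma finite_nearly_indep1_with_edge: "simple_graph V E \<Longrightarrow> finite (nearly_indep1_with_edge V E e)"
  unfolding nearly_indep1_with_edge_def by (rule finite_subset[OF _ finite_nearly_indep1]) auto

lemma nearly_indep1_edges_eq:
  assumes "S \<in> nearly_indep1 V E" "e \<in> E" "e \<subseteq> S"
  shows "{e' \<in> E. e' \<subseteq> S} = {e}"
proof -
  obtain e' where "{e' \<in> E. e' \<subseteq> S} = {e'}"
    using assms(1) unfolding nearly_indep1_def by (auto simp: card_1_singleton_iff)
  moreover have "e \<in> {e' \<in> E. e' \<subseteq> S}"
    using assms(2,3) by simp
  ultimately show ?thesis by simp
qed

lemma edge_in_nearly_indep1:
  assumes "simple_graph V E" "e \<in> E"
  shows "e \<in> nearly_indep1 V E"
proof -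
  have "e' = e" if "e' \<in> E" "e' \<subseteq> e" for e'
    using assms that unfolding simple_graph_def by (metis card.infinite card_subset_eq zero_neq_numeral)
  then have edges: "{e' \<in> E. e' \<subseteq> e} = {e}"
    using assms(2) by blast
  have "e \<subseteq> V"
    using assms unfolding simple_graph_def by blast
  then show ?thesis
    unfolding nearly_indep1_def mem_Collect_eq edges by simp
qed

lemma nearly_indep1_with_edge_unique:
  assumes "S \<in> nearly_indep1_with_edge V E e" "S \<in> nearly_indep1_with_edge V E e'" "e \<in> E" "e' \<in> E"
  shows "e = e'"
proof -
  have "{e} = {e'}"
    using assms nearly_indep1_edges_eq[of S V E e] nearly_indep1_edges_eq[of S V E e']
    unfolding nearly_indep1_with_edge_def by simp
  then show ?thesis by simp
qed

lemma nearly_indep1_eq_Union_with_edge: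
  "nearly_indep1 V E = (\<Union>e\<in>E. nearly_indep1_with_edge V E e)"
proof -
  have "S \<in> (\<Union>e\<in>E. nearly_indep1_with_edge V E e)" if S: "S \<in> nearly_indep1 V E" for S
  proof -
    obtain e where "{e' \<in> E. e' \<subseteq> S} = {e}"
      using S unfolding nearly_indep1_def by (auto simp: card_1_singleton_iff)
    then have "e \<in> E" "e \<subseteq> S" by auto
    with S show ?thesis
      unfolding nearly_indep1_with_edge_def by blast
  qed
  then show ?thesis
    unfolding nearly_indep1_with_edge_def by blast
qed

lemma sum_nearly_indep1_by_edge:
  assumes "simple_graph V E"
  shows "sum g (nearly_indep1 V E) = (\<Sum>e\<in>E. sum g (nearly_indep1_with_edge V E e))"
  unfolding nearly_indep1_eq_Union_with_edge
proof (rule sum.UNION_disjoint)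
  show "finite E"
    using assms by (rule simple_graph_finite_edges)
  show "\<forall>e\<in>E. finite (nearly_indep1_with_edge V E e)"
    using assms by (simp add: finite_nearly_indep1_with_edge)
  show "\<forall>e\<in>E. \<forall>e'\<in>E. e \<noteq> e' \<longrightarrow> nearly_indep1_with_edge V E e \<inter> nearly_indep1_with_edge V E e' = {}"
    using nearly_indep1_with_edge_unique by blast
qed

lemma edge_subset_closed_nbhd: "e \<subseteq> closed_nbhd E e"
  unfolding closed_nbhd_def by blast

lemma closed_nbhd_subset:
  assumes "simple_graph V E" "X \<subseteq> V"
  shows "closed_nbhd E X \<subseteq> V"
  using assms unfolding closed_nbhd_def adj_def simple_graph_def by blast

text \<open>Since e is the only edge inside S, S meets the closed neighbourhood of e only in e.\<close>

lemma card_nearly_indep1_with_edge: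
  assumes "simple_graph V E" "e \<in> E" "S \<in> nearly_indep1_with_edge V E e"
  shows "card S = 2 + card {x \<in> V - closed_nbhd E e. x \<in> S}"
proof -
  have S: "S \<in> nearly_indep1 V E" "e \<subseteq> S" "S \<subseteq> V"
    using assms(3) unfolding nearly_indep1_with_edge_def nearly_indep1_def by auto
  have edges: "{e' \<in> E. e' \<subseteq> S} = {e}"
    using nearly_indep1_edges_eq[OF S(1) assms(2) S(2)] .
  have inside: "w \<in> e" if w: "w \<in> S" "w \<in> closed_nbhd E e" for w
  proof (rule ccontr)
    assume "w \<notin> e"
    then obtain x where "x \<in> e" "{x, w} \<in> E"
      using w(2) unfolding closed_nbhd_def adj_def by blast
    then have "{x, w} \<in> {e' \<in> E. e' \<subseteq> S}"
      using S(2) w(1) by blast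
    then have "{x, w} = e"
      unfolding edges by simp
    with \<open>w \<notin> e\<close> show False by blast
  qed
  define R where "R = {x \<in> V - closed_nbhd E e. x \<in> S}"
  have "S = e \<union> R"
    unfolding R_def using inside S(2,3) edge_subset_closed_nbhd[of e E] by blast
  moreover have "finite R" "finite e" "card e = 2"
    using assms(1,2) unfolding R_def simple_graph_def by (auto intro: card_ge_0_finite)
  moreover have "e \<inter> R = {}"
    unfolding R_def using edge_subset_closed_nbhd[of e E] by blast
  ultimately show ?thesis
    unfolding R_def[symmetric] using card_Un_disjoint[of e R] by simp
qed

text \<open>Deleting a vertex outside e maps the sets containing it injectively to sets avoiding it.\<close>

lemma card_nearly_indep1_with_edge_containing:
  assumes "simple_graph V E" "e \<in> E" "x \<notin> e"
  shows "2 * card {S \<in> nearly_indep1_with_edge V E e. x \<in> S} \<le> card (nearly_indep1_with_edge V E e)"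
proof -
  let ?F = "nearly_indep1_with_edge V E e"
  let ?A = "{S \<in> ?F. x \<in> S}" and ?B = "{S \<in> ?F. x \<notin> S}"
  have "S - {x} \<in> ?B" if "S \<in> ?A" for S
  proof -
    have S: "S \<in> nearly_indep1 V E" "e \<subseteq> S" "S \<subseteq> V"
      using that unfolding nearly_indep1_with_edge_def nearly_indep1_def by auto
    have "{e' \<in> E. e' \<subseteq> S - {x}} = {e}"
      using nearly_indep1_edges_eq[OF S(1) assms(2) S(2)] S(2) assms(3) by blast
    with S show ?thesis
      unfolding nearly_indep1_with_edge_def nearly_indep1_def using assms(3) by auto
  qed
  moreover have "inj_on (\<lambda>S. S - {x}) ?A"
    by (rule inj_onI) blast
  ultimately have "card ?A \<le> card ?B"
    using finite_nearly_indep1_with_edge[OF assms(1)] by (intro card_inj_on_le) auto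
  moreover have "card (?A \<union> ?B) = card ?A + card ?B"
    using finite_nearly_indep1_with_edge[OF assms(1)] by (intro card_Un_disjoint) auto
  moreover have "card ?F = card (?A \<union> ?B)"
    by (rule arg_cong[where f = card]) blast
  ultimately show ?thesis by linarith
qed

lemma sum_card_nearly_indep1_with_edge:
  assumes "simple_graph V E" "e \<in> E"
  shows "2 * (\<Sum>S\<in>nearly_indep1_with_edge V E e. card S)
           \<le> (4 + card (V - closed_nbhd E e)) * card (nearly_indep1_with_edge V E e)"
proof -
  define F where "F = nearly_indep1_with_edge V E e"
  define W where "W = V - closed_nbhd E e"
  have fin: "finite F" "finite W"
    using assms(1) finite_nearly_indep1_with_edge unfolding F_def W_def simple_graph_def by auto
  have "(\<Sum>S\<in>F. card S) = (\<Sum>S\<in>F. 2 + card {x \<in> W. x \<in> S})"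
    using card_nearly_indep1_with_edge[OF assms] unfolding F_def W_def by simp
  also have "\<dots> = 2 * card F + (\<Sum>S\<in>F. card {x \<in> W. x \<in> S})"
    by (subst sum.distrib) simp
  also have "(\<Sum>S\<in>F. card {x \<in> W. x \<in> S}) = (\<Sum>x\<in>W. card {S \<in> F. x \<in> S})"
    using fin by (intro sum_multicount_gen) auto
  finally have "2 * (\<Sum>S\<in>F. card S) = 4 * card F + (\<Sum>x\<in>W. 2 * card {S \<in> F. x \<in> S})"
    by (simp add: sum_distrib_left)
  also have "\<dots> \<le> 4 * card F + (\<Sum>x\<in>W. card F)"
    using card_nearly_indep1_with_edge_containing[OF assms] edge_subset_closed_nbhd[of e E]
    unfolding F_def W_def by (intro add_left_mono sum_mono) blast
  finally show ?thesis
    unfolding F_def W_def by (simp add: algebra_simps)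
qed

lemma degree_eq_card_neighbours:
  assumes "simple_graph V E"
  shows "degree E u = card {w. adj E u w}"
proof -
  have "bij_betw (\<lambda>w. {u, w}) {w. adj E u w} {e \<in> E. u \<in> e}"
  proof (rule bij_betwI')
    fix x y assume "x \<in> {w. adj E u w}" "y \<in> {w. adj E u w}"
    then have "x \<noteq> u" "y \<noteq> u"
      using assms unfolding adj_def simple_graph_def by force+
    then show "({u, x} = {u, y}) = (x = y)"
      by (auto simp: doubleton_eq_iff)
  next
    fix e assume "e \<in> {e \<in> E. u \<in> e}"
    then show "\<exists>x\<in>{w. adj E u w}. e = {u, x}"
      using assms unfolding adj_def by (auto elim!: simple_graph_edgeE simp: insert_commute)
  qed (simp add: adj_def)
  then show ?thesis
    unfolding degree_def by (simp add: bij_betw_same_card)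
qed

lemma card_closed_nbhd_edge:
  assumes "simple_graph V E" "{u, v} \<in> E"
  shows "degree E u + 1 \<le> card (closed_nbhd E {u, v})"
proof -
  let ?N = "{w. adj E u w}"
  have "?N \<subseteq> V" "u \<notin> ?N" "finite V"
    using assms(1) unfolding adj_def simple_graph_def by fastforce+
  then have "finite ?N"
    by (meson finite_subset)
  with \<open>u \<notin> ?N\<close> have "card (insert u ?N) = degree E u + 1"
    using degree_eq_card_neighbours[OF assms(1)] by simp
  moreover have "finite (closed_nbhd E {u, v})"
    using closed_nbhd_subset[OF assms(1)] assms \<open>finite V\<close> unfolding simple_graph_def
    by (meson finite_subset)
  moreover have "insert u ?N \<subseteq> closed_nbhd E {u, v}"
    unfolding closed_nbhd_def by blast
  ultimately show ?thesis
    by (metis card_mono)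
qed

lemma connected_graph_has_edge:
  assumes "connected_graph V E" "card V \<ge> 2"
  shows "E \<noteq> {}"
proof -
  have "finite V"
    using assms(2) card.infinite by fastforce
  then obtain u w where "u \<in> V" "w \<in> V" "u \<noteq> w"
    using assms(2) card_le_Suc0_iff_eq[of V] by auto
  then have "(adj E)\<^sup>*\<^sup>* u w"
    using assms(1) unfolding connected_graph_def by blast
  with \<open>u \<noteq> w\<close> obtain y where "adj E u y"
    by (metis converse_rtranclpE)
  then show ?thesis
    unfolding adj_def by blast
qed

text \<open>If both ends of an edge had degree 1, the edge would be a whole connected component.\<close>

lemma edge_has_internal_end:
  assumes "simple_graph V E" "connected_graph V E" "card V \<ge> 3" "{u, v} \<in> E"
  shows "degree E u > 1 \<or> degree E v > 1"
proof (rule ccontr)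
  assume leaves: "\<not> ?thesis"
  have only_edge: "{e \<in> E. x \<in> e} = {{u, v}}" if "x \<in> {u, v}" for x
  proof -
    let ?A = "{e \<in> E. x \<in> e}"
    have "{u, v} \<in> ?A"
      using assms(4) that by blast
    moreover have "finite ?A"
      using simple_graph_finite_edges[OF assms(1)] by simp
    moreover have "card ?A \<le> 1"
      using leaves that unfolding degree_def by auto
    ultimately have "card ?A = 1"
      by (metis card_0_eq empty_iff le_antisym less_one not_le)
    then obtain a where "?A = {a}"
      by (rule card_1_singletonE)
    with \<open>{u, v} \<in> ?A\<close> show ?thesis
      by simp
  qed
  have "y \<in> {u, v}" if "(adj E)\<^sup>*\<^sup>* u y" for y
    using that
  proof (induction rule: rtranclp_induct)
    case (step y z)
    then have "{y, z} \<in> {e \<in> E. y \<in> e}"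
      unfolding adj_def by simp
    then have "{y, z} = {u, v}"
      unfolding only_edge[OF step.IH] by simp
    then show ?case
      by (metis insertCI)
  qed simp
  moreover have "u \<in> V"
    using assms(1,4) unfolding simple_graph_def by auto
  ultimately have "V \<subseteq> {u, v}"
    using assms(2) unfolding connected_graph_def by blast
  then have "card V \<le> 2"
    using card_mono[of "{u, v}" V] by (simp add: card_insert_if split: if_splits)
  with assms(3) show False by simp
qed

lemma card_outside_closed_nbhd_edge:
  assumes "simple_graph V E" "connected_graph V E" "card V \<ge> 3" "e \<in> E"
  shows "card (V - closed_nbhd E e) + min_internal_degree V E + 1 \<le> card V"
proof -
  obtain a b where e: "e = {a, b}" and "a \<in> V" and a_internal: "degree E a > 1"
  proof -
    obtain u v where uv: "e = {u, v}" "u \<in> V" "v \<in> V"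
      using assms(1,4) by (rule simple_graph_edgeE)
    then consider "degree E u > 1" | "degree E v > 1"
      using edge_has_internal_end[OF assms(1-3)] assms(4) by blast
    then show thesis
      using that uv by cases (auto simp: insert_commute)
  qed
  have "finite V" "closed_nbhd E e \<subseteq> V"
    using closed_nbhd_subset[OF assms(1)] assms(1,4) unfolding simple_graph_def by auto
  then have card_diff: "card (V - closed_nbhd E e) = card V - card (closed_nbhd E e)"
    and "card (closed_nbhd E e) \<le> card V"
    by (auto intro: card_Diff_subset finite_subset card_mono)
  have "min_internal_degree V E \<le> degree E a"
    unfolding min_internal_degree_def using \<open>finite V\<close> \<open>a \<in> V\<close> a_internal by (intro Min_le) auto
  moreover have "degree E a + 1 \<le> card (closed_nbhd E e)"
    using card_closed_nbhd_edge[OF assms(1)] assms(4) e by blast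
  ultimately show ?thesis
    using card_diff \<open>card (closed_nbhd E e) \<le> card V\<close> by linarith
qed

lemma sum_card_nearly_indep1_with_edge_le:
  assumes "simple_graph V E" "connected_graph V E" "card V \<ge> 3" "e \<in> E"
  shows "(\<Sum>S\<in>nearly_indep1_with_edge V E e. real (card S))
           \<le> (2 + (real (card V) - real (min_internal_degree V E) - 1) / 2)
             * real (card (nearly_indep1_with_edge V E e))"
proof -
  let ?F = "nearly_indep1_with_edge V E e"
  have "real (card (V - closed_nbhd E e)) \<le> real (card V) - real (min_internal_degree V E) - 1"
    using card_outside_closed_nbhd_edge[OF assms] by linarith
  then have "(4 + real (card (V - closed_nbhd E e))) * real (card ?F)
               \<le> (4 + (real (card V) - real (min_internal_degree V E) - 1)) * real (card ?F)"
    by (intro mult_right_mono) auto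
  moreover have "2 * (\<Sum>S\<in>?F. real (card S)) \<le> (4 + real (card (V - closed_nbhd E e))) * real (card ?F)"
    using of_nat_mono[where 'a = real, OF sum_card_nearly_indep1_with_edge[OF assms(1,4)]] by simp
  ultimately show ?thesis
    by (simp add: field_simps)
qed

lemma av1_le_connected:
  assumes "simple_graph V E" "connected_graph V E" "card V \<ge> 3"
  shows "av1 V E \<le> 2 + (real (card V) - real (min_internal_degree V E) - 1) / 2"
proof -
  define c where "c = 2 + (real (card V) - real (min_internal_degree V E) - 1) / 2"
  obtain e where "e \<in> E"
    using connected_graph_has_edge[OF assms(2)] assms(3) by fastforce
  then have "sigma1 V E > 0"
    unfolding sigma1_def using edge_in_nearly_indep1[OF assms(1)] finite_nearly_indep1[OF assms(1)]
    by (auto simp: card_gt_0_iff)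
  have "real (S1 V E) = (\<Sum>e\<in>E. \<Sum>S\<in>nearly_indep1_with_edge V E e. real (card S))"
    unfolding S1_def of_nat_sum sum_nearly_indep1_by_edge[OF assms(1)] ..
  also have "\<dots> \<le> (\<Sum>e\<in>E. c * real (card (nearly_indep1_with_edge V E e)))"
    unfolding c_def using sum_card_nearly_indep1_with_edge_le[OF assms] by (rule sum_mono)
  also have "\<dots> = c * real (sigma1 V E)"
    unfolding sigma1_def card_eq_sum sum_nearly_indep1_by_edge[OF assms(1)]
    by (simp add: sum_distrib_left)
  finally show ?thesis
    unfolding av1_def c_def[symmetric] using \<open>sigma1 V E > 0\<close> by (simp add: divide_le_eq)
qed

theorem mainTheorem10:
  fixes V :: "'a set" and E :: "'a set set"
  assumes "is_tree V E"
    and "card V \<ge> 3"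
  shows "av1 V E \<le> 2 + (real (card V) - real (min_internal_degree V E) - 1) / 2"
  using assms av1_le_connected unfolding is_tree_def by blast

end
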